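(* Let $X,Y\in\mathcal L^2$. Then $(X,Y)\in\mathrm{IC}_0$ if and only if $(X,Y)$ is quasi-independent.
   Context: All random variables live on an atomless probability space. $\mathcal L^2$ denotes the set of non-degenerate real random variables with finite variance. A function $g:\mathbb R\to\mathbb R$ is admissible for $(X,Y)$ if it is measurable and $g(X),g(Y)\in\mathcal L^2$. For $r\in[-1,1]$, $(X,Y)\in\mathrm{IC}_r$ ($(X,Y)$ has invariant correlation $r$) means $X,Y\in\mathcal L^2$ and $\mathrm{Corr}(X,Y)=\mathrm{Corr}(g(X),g(Y))=r$ for all admissible $g$. A random vector $(X,Y)$ with joint distribution function $H$ and marginal distribution functions $F$ (of $X$) and $G$ (of $Y$) is quasi-independent if $\frac{H(x,y)+H(y,x)}{2}=\frac12F(x)G(y)+\frac12F(y)G(x)$ for all $x,y\in\mathbb R$. *)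

theory Defs
  imports "HOL-Probability.Probability"
begin

definition atomless :: "'a measure \<Rightarrow> bool" where
  "atomless M \<longleftrightarrow> (\<forall>A\<in>sets M. measure M A > 0 \<longrightarrow>
     (\<exists>B\<in>sets M. B \<subseteq> A \<and> 0 < measure M B \<and> measure M B < measure M A))"

definition L2 :: "'a measure \<Rightarrow> ('a \<Rightarrow> real) \<Rightarrow> bool" where
  "L2 M X \<longleftrightarrow> X \<in> borel_measurable M \<and> integrable M (\<lambda>\<omega>. (X \<omega>)\<^sup>2)
     \<and> \<not> (\<exists>c. AE \<omega> in M. X \<omega> = c)"

definition cov :: "'a measure \<Rightarrow> ('a \<Rightarrow> real) \<Rightarrow> ('a \<Rightarrow> real) \<Rightarrow> real" where
  "cov M X Y = (\<integral>\<omega>. (X \<omega> - (\<integral>\<omega>'. X \<omega>' \<partial>M)) * (Y \<omega> - (\<integral>\<omega>'. Y \<omega>' \<partial>M)) \<partial>M)"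

definition corr :: "'a measure \<Rightarrow> ('a \<Rightarrow> real) \<Rightarrow> ('a \<Rightarrow> real) \<Rightarrow> real" where
  "corr M X Y = cov M X Y / sqrt (cov M X X * cov M Y Y)"

definition admissible :: "'a measure \<Rightarrow> ('a \<Rightarrow> real) \<Rightarrow> ('a \<Rightarrow> real) \<Rightarrow> (real \<Rightarrow> real) \<Rightarrow> bool" where
  "admissible M X Y g \<longleftrightarrow> g \<in> borel_measurable borel \<and> L2 M (\<lambda>\<omega>. g (X \<omega>)) \<and> L2 M (\<lambda>\<omega>. g (Y \<omega>))"

definition IC :: "'a measure \<Rightarrow> real \<Rightarrow> ('a \<Rightarrow> real) \<Rightarrow> ('a \<Rightarrow> real) \<Rightarrow> bool" where
  "IC M r X Y \<longleftrightarrow> L2 M X \<and> L2 M Y \<and> corr M X Y = r \<and>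
     (\<forall>g. admissible M X Y g \<longrightarrow> corr M (\<lambda>\<omega>. g (X \<omega>)) (\<lambda>\<omega>. g (Y \<omega>)) = r)"

definition joint_cdf :: "'a measure \<Rightarrow> ('a \<Rightarrow> real) \<Rightarrow> ('a \<Rightarrow> real) \<Rightarrow> real \<Rightarrow> real \<Rightarrow> real" where
  "joint_cdf M X Y x y = measure M {\<omega> \<in> space M. X \<omega> \<le> x \<and> Y \<omega> \<le> y}"

definition cdf_of :: "'a measure \<Rightarrow> ('a \<Rightarrow> real) \<Rightarrow> real \<Rightarrow> real" where
  "cdf_of M X x = measure M {\<omega> \<in> space M. X \<omega> \<le> x}"

definition quasi_independent :: "'a measure \<Rightarrow> ('a \<Rightarrow> real) \<Rightarrow> ('a \<Rightarrow> real) \<Rightarrow> bool" where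
  "quasi_independent M X Y \<longleftrightarrow> (\<forall>x y.
     (joint_cdf M X Y x y + joint_cdf M X Y y x) / 2 =
       1/2 * cdf_of M X x * cdf_of M Y y + 1/2 * cdf_of M X y * cdf_of M Y x)"

end

(*
  Both conditions amount to Cov(g X, g Y) = 0 for every Borel function g with g X and g Y
  square integrable.

  Under IC_0 this holds for admissible g by definition, and for every other such g because
  then g X or g Y is almost surely constant. Applying it to the indicators of (-oo, x] and
  (-oo, y] and to their sum, bilinearity of the covariance yields
  H(x, y) - F(x) G(y) + H(y, x) - F(y) G(x) = 0, which is quasi-independence.

  Conversely, quasi-independence says that the joint law of (X, Y) and the product of its
  marginals give the same mass to (-oo, a] x (-oo, b] and (-oo, b] x (-oo, a] together.
  The preimage of an orthant under (a, b) |-> (min a b, max a b) is the union of two such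
  mirror-image orthants, so both laws have the same image under this map and therefore
  integrate every symmetric function, in particular g(a) g(b), to the same value:
  E[g X g Y] = E[g X] E[g Y].
*)
theory Submission
  imports Defs
begin

lemma square_integrable_imp_integrable_mult:
  fixes A B :: "'a \<Rightarrow> real"
  assumes [measurable]: "A \<in> borel_measurable M" "B \<in> borel_measurable M"
    and "integrable M (\<lambda>\<omega>. (A \<omega>)\<^sup>2)" "integrable M (\<lambda>\<omega>. (B \<omega>)\<^sup>2)"
  shows "integrable M (\<lambda>\<omega>. A \<omega> * B \<omega>)"
proof (rule Bochner_Integration.integrable_bound)
  show "integrable M (\<lambda>\<omega>. (A \<omega>)\<^sup>2 + (B \<omega>)\<^sup>2)"
    using assms(3,4) by simp
  have "\<bar>a * b\<bar> \<le> a\<^sup>2 + b\<^sup>2" for a b :: real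
  proof -
    have "\<bar>a * b\<bar> \<le> 2 * \<bar>a * b\<bar>" by simp
    also have "\<dots> \<le> a\<^sup>2 + b\<^sup>2"
      using sum_squares_bound[of "\<bar>a\<bar>" "\<bar>b\<bar>"] by (simp add: abs_mult)
    finally show ?thesis .
  qed
  then show "AE \<omega> in M. norm (A \<omega> * B \<omega>) \<le> norm ((A \<omega>)\<^sup>2 + (B \<omega>)\<^sup>2)"
    by simp
qed simp

context prob_space
begin

lemma cov_commute: "cov M A B = cov M B A"
  unfolding cov_def by (simp add: mult.commute)

lemma cov_AE_const_left:
  assumes [measurable]: "A \<in> borel_measurable M" "B \<in> borel_measurable M"
    and const: "AE \<omega> in M. A \<omega> = c"
  shows "cov M A B = 0"
proof -
  have "expectation A = c"
    using integral_cong_AE[of A M "\<lambda>_. c"] const by (simp add: prob_space)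
  then have "cov M A B = (\<integral>\<omega>. 0 \<partial>M)"
    unfolding cov_def by (intro integral_cong_AE) (use const in auto)
  then show ?thesis by simp
qed

lemma cov_self_eq_0_imp_AE_eq_expectation:
  assumes [measurable]: "A \<in> borel_measurable M"
    and square: "integrable M (\<lambda>\<omega>. (A \<omega>)\<^sup>2)" and "cov M A A = 0"
  shows "AE \<omega> in M. A \<omega> = expectation A"
proof -
  define e where "e = expectation A"
  have "integrable M A"
    by (rule square_integrable_imp_integrable[OF _ square]) simp
  moreover have "(\<lambda>\<omega>. (A \<omega> - e) * (A \<omega> - e)) = (\<lambda>\<omega>. (A \<omega>)\<^sup>2 - 2 * e * A \<omega> + e\<^sup>2)"
    by (auto simp: power2_eq_square algebra_simps)
  ultimately have integrable: "integrable M (\<lambda>\<omega>. (A \<omega> - e) * (A \<omega> - e))"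
    using square by simp
  have "AE \<omega> in M. (A \<omega> - e) * (A \<omega> - e) = 0"
    using integral_nonneg_eq_0_iff_AE[OF integrable] \<open>cov M A A = 0\<close> unfolding cov_def e_def by simp
  then show ?thesis
    by eventually_elim (simp add: e_def)
qed

lemma corr_eq_0_imp_cov_eq_0:
  assumes [measurable]: "A \<in> borel_measurable M" "B \<in> borel_measurable M"
    and square_A: "integrable M (\<lambda>\<omega>. (A \<omega>)\<^sup>2)" and square_B: "integrable M (\<lambda>\<omega>. (B \<omega>)\<^sup>2)"
    and "corr M A B = 0"
  shows "cov M A B = 0"
proof (rule ccontr)
  assume nonzero: "cov M A B \<noteq> 0"
  \<comment> \<open>possible only through the junk value of a division by zero\<close>
  with \<open>corr M A B = 0\<close> have "cov M A A = 0 \<or> cov M B B = 0"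
    unfolding corr_def by simp
  then show False
  proof
    assume "cov M A A = 0"
    with square_A have "AE \<omega> in M. A \<omega> = expectation A"
      by (intro cov_self_eq_0_imp_AE_eq_expectation) simp_all
    then have "cov M A B = 0"
      by (rule cov_AE_const_left[rotated 2]) simp_all
    with nonzero show False ..
  next
    assume "cov M B B = 0"
    with square_B have "AE \<omega> in M. B \<omega> = expectation B"
      by (intro cov_self_eq_0_imp_AE_eq_expectation) simp_all
    then have "cov M B A = 0"
      by (rule cov_AE_const_left[rotated 2]) simp_all
    with nonzero show False
      by (simp add: cov_commute)
  qed
qed

lemma cov_eq_expectation_mult:
  assumes "integrable M A" "integrable M B" "integrable M (\<lambda>\<omega>. A \<omega> * B \<omega>)"
  shows "cov M A B = expectation (\<lambda>\<omega>. A \<omega> * B \<omega>) - expectation A * expectation B"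
proof -
  have "cov M A B = expectation (\<lambda>\<omega>. A \<omega> * B \<omega> - expectation B * A \<omega> - expectation A * B \<omega>
      + expectation A * expectation B)"
    unfolding cov_def by (simp add: algebra_simps)
  also have "\<dots> = expectation (\<lambda>\<omega>. A \<omega> * B \<omega>) - expectation A * expectation B"
    using assms by (simp add: prob_space)
  finally show ?thesis .
qed

lemma cov_add_add:
  assumes "integrable M A1" "integrable M A2" "integrable M B1" "integrable M B2"
    "integrable M (\<lambda>\<omega>. A1 \<omega> * B1 \<omega>)" "integrable M (\<lambda>\<omega>. A1 \<omega> * B2 \<omega>)"
    "integrable M (\<lambda>\<omega>. A2 \<omega> * B1 \<omega>)" "integrable M (\<lambda>\<omega>. A2 \<omega> * B2 \<omega>)"
  shows "cov M (\<lambda>\<omega>. A1 \<omega> + A2 \<omega>) (\<lambda>\<omega>. B1 \<omega> + B2 \<omega>)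
    = cov M A1 B1 + cov M A1 B2 + cov M A2 B1 + cov M A2 B2"
proof -
  have expand: "(\<lambda>\<omega>. (A1 \<omega> + A2 \<omega>) * (B1 \<omega> + B2 \<omega>)) =
      (\<lambda>\<omega>. A1 \<omega> * B1 \<omega> + A1 \<omega> * B2 \<omega> + A2 \<omega> * B1 \<omega> + A2 \<omega> * B2 \<omega>)"
    by (simp add: algebra_simps)
  have "cov M (\<lambda>\<omega>. A1 \<omega> + A2 \<omega>) (\<lambda>\<omega>. B1 \<omega> + B2 \<omega>)
      = expectation (\<lambda>\<omega>. A1 \<omega> * B1 \<omega> + A1 \<omega> * B2 \<omega> + A2 \<omega> * B1 \<omega> + A2 \<omega> * B2 \<omega>)
        - expectation (\<lambda>\<omega>. A1 \<omega> + A2 \<omega>) * expectation (\<lambda>\<omega>. B1 \<omega> + B2 \<omega>)"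
    using assms by (subst cov_eq_expectation_mult) (simp_all add: expand)
  also have "\<dots> = cov M A1 B1 + cov M A1 B2 + cov M A2 B1 + cov M A2 B2"
    using assms by (simp add: cov_eq_expectation_mult algebra_simps)
  finally show ?thesis .
qed

lemma IC_0_imp_cov_eq_0:
  fixes X Y :: "'a \<Rightarrow> real"
  assumes IC: "IC M 0 X Y"
    and [measurable]: "X \<in> borel_measurable M" "Y \<in> borel_measurable M" "g \<in> borel_measurable borel"
    and square_X: "integrable M (\<lambda>\<omega>. (g (X \<omega>))\<^sup>2)"
    and square_Y: "integrable M (\<lambda>\<omega>. (g (Y \<omega>))\<^sup>2)"
  shows "cov M (\<lambda>\<omega>. g (X \<omega>)) (\<lambda>\<omega>. g (Y \<omega>)) = 0"
proof (cases "admissible M X Y g")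
  case True
  then have "corr M (\<lambda>\<omega>. g (X \<omega>)) (\<lambda>\<omega>. g (Y \<omega>)) = 0"
    using IC unfolding IC_def by blast
  then show ?thesis
    using square_X square_Y by (intro corr_eq_0_imp_cov_eq_0) simp_all
next
  case False
  then have "(\<exists>c. AE \<omega> in M. g (X \<omega>) = c) \<or> (\<exists>c. AE \<omega> in M. g (Y \<omega>) = c)"
    using square_X square_Y unfolding admissible_def L2_def by auto
  then show ?thesis
  proof (elim disjE exE)
    fix c assume "AE \<omega> in M. g (X \<omega>) = c"
    then show ?thesis by (rule cov_AE_const_left[rotated 2]) simp_all
  next
    fix c assume "AE \<omega> in M. g (Y \<omega>) = c"
    then have "cov M (\<lambda>\<omega>. g (Y \<omega>)) (\<lambda>\<omega>. g (X \<omega>)) = 0"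
      by (rule cov_AE_const_left[rotated 2]) simp_all
    then show ?thesis by (simp add: cov_commute)
  qed
qed

lemma IC_0_imp_cov_eq_0_bounded:
  fixes X Y :: "'a \<Rightarrow> real"
  assumes "IC M 0 X Y"
    and [measurable]: "X \<in> borel_measurable M" "Y \<in> borel_measurable M" "g \<in> borel_measurable borel"
    and bounded: "\<And>t. \<bar>g t\<bar> \<le> K"
  shows "cov M (\<lambda>\<omega>. g (X \<omega>)) (\<lambda>\<omega>. g (Y \<omega>)) = 0"
proof -
  have "norm ((g t)\<^sup>2) \<le> K\<^sup>2" for t
    using power_mono[OF bounded[of t] abs_ge_zero, of 2] by simp
  then have "integrable M (\<lambda>\<omega>. (g (Z \<omega>))\<^sup>2)" if [measurable]: "Z \<in> borel_measurable M" for Z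
    by (intro integrable_const_bound[where B="K\<^sup>2"]) simp_all
  then show ?thesis
    using assms by (intro IC_0_imp_cov_eq_0) simp_all
qed

lemma expectation_indicator_atMost:
  fixes X :: "'a \<Rightarrow> real"
  assumes [measurable]: "X \<in> borel_measurable M"
  shows "expectation (\<lambda>\<omega>. indicator {..a} (X \<omega>)) = cdf_of M X a"
proof -
  have "expectation (\<lambda>\<omega>. indicator {..a} (X \<omega>))
      = expectation (indicator {\<omega> \<in> space M. X \<omega> \<le> a})"
    by (intro Bochner_Integration.integral_cong) (auto split: split_indicator)
  also have "\<dots> = cdf_of M X a"
    unfolding cdf_of_def by (simp add: Int_absorb2 subset_eq)
  finally show ?thesis .
qed

lemma expectation_indicator_atMost_mult:
  fixes X Y :: "'a \<Rightarrow> real"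
  assumes [measurable]: "X \<in> borel_measurable M" "Y \<in> borel_measurable M"
  shows "expectation (\<lambda>\<omega>. indicator {..a} (X \<omega>) * indicator {..b} (Y \<omega>)) = joint_cdf M X Y a b"
proof -
  have "expectation (\<lambda>\<omega>. indicator {..a} (X \<omega>) * indicator {..b} (Y \<omega>))
      = expectation (indicator {\<omega> \<in> space M. X \<omega> \<le> a \<and> Y \<omega> \<le> b} :: 'a \<Rightarrow> real)"
    by (intro Bochner_Integration.integral_cong) (auto split: split_indicator)
  also have "\<dots> = joint_cdf M X Y a b"
    unfolding joint_cdf_def by (simp add: Int_absorb2 subset_eq)
  finally show ?thesis .
qed

lemma integrable_indicator_atMost:
  fixes X :: "'a \<Rightarrow> real"
  assumes [measurable]: "X \<in> borel_measurable M"
  shows "integrable M (\<lambda>\<omega>. indicator {..a} (X \<omega>) :: real)"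
  by (rule integrable_const_bound[where B=1]) (simp split: split_indicator, measurable)

lemma integrable_indicator_atMost_mult:
  fixes X Y :: "'a \<Rightarrow> real"
  assumes [measurable]: "X \<in> borel_measurable M" "Y \<in> borel_measurable M"
  shows "integrable M (\<lambda>\<omega>. indicator {..a} (X \<omega>) * indicator {..b} (Y \<omega>) :: real)"
  by (rule integrable_const_bound[where B=1]) (simp split: split_indicator, measurable)

lemma cov_indicator_atMost:
  fixes X Y :: "'a \<Rightarrow> real"
  assumes "X \<in> borel_measurable M" "Y \<in> borel_measurable M"
  shows "cov M (\<lambda>\<omega>. indicator {..a} (X \<omega>)) (\<lambda>\<omega>. indicator {..b} (Y \<omega>))
    = joint_cdf M X Y a b - cdf_of M X a * cdf_of M Y b"
  using assms
  by (simp add: cov_eq_expectation_mult integrable_indicator_atMost integrable_indicator_atMost_mult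
      expectation_indicator_atMost expectation_indicator_atMost_mult)

lemma IC_0_imp_quasi_independent:
  fixes X Y :: "'a \<Rightarrow> real"
  assumes IC: "IC M 0 X Y" and [measurable]: "X \<in> borel_measurable M" "Y \<in> borel_measurable M"
  shows "quasi_independent M X Y"
  unfolding quasi_independent_def
proof (intro allI)
  fix x y :: real
  let ?I = "\<lambda>a t. indicator {..a} t :: real"
  have cov_diagonal: "cov M (\<lambda>\<omega>. ?I a (X \<omega>)) (\<lambda>\<omega>. ?I a (Y \<omega>)) = 0" for a
    using IC by (rule IC_0_imp_cov_eq_0_bounded[where K=1]) simp_all
  have "cov M (\<lambda>\<omega>. ?I x (X \<omega>) + ?I y (X \<omega>)) (\<lambda>\<omega>. ?I x (Y \<omega>) + ?I y (Y \<omega>)) = 0"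
    using IC by (rule IC_0_imp_cov_eq_0_bounded[where g="\<lambda>t. ?I x t + ?I y t" and K=2])
      (simp_all split: split_indicator)
  then have "cov M (\<lambda>\<omega>. ?I x (X \<omega>)) (\<lambda>\<omega>. ?I y (Y \<omega>))
      + cov M (\<lambda>\<omega>. ?I y (X \<omega>)) (\<lambda>\<omega>. ?I x (Y \<omega>)) = 0"
    using cov_diagonal[of x] cov_diagonal[of y]
    by (simp add: cov_add_add integrable_indicator_atMost integrable_indicator_atMost_mult)
  then show "(joint_cdf M X Y x y + joint_cdf M X Y y x) / 2 =
      1/2 * cdf_of M X x * cdf_of M Y y + 1/2 * cdf_of M X y * cdf_of M Y x"
    by (simp add: cov_indicator_atMost)
qed

end

definition sort_pair :: "'a::linorder \<times> 'a \<Rightarrow> 'a \<times> 'a" where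
  "sort_pair p = (min (fst p) (snd p), max (fst p) (snd p))"

lemma borel_measurable_sort_pair [measurable]:
  "sort_pair \<in> borel_measurable (borel :: (real \<times> real) measure)"
  unfolding sort_pair_def borel_prod[symmetric] by measurable

lemma sort_pair_vimage_atMost:
  "sort_pair -` {..(s, t)} = {..min s t} \<times> {..t} \<union> {..t} \<times> {..min s t}"
  for s t :: real
  by (auto simp: sort_pair_def min_def max_def split: if_splits)

lemma measure_sort_pair_vimage_atMost:
  fixes \<mu> :: "(real \<times> real) measure"
  assumes "finite_measure \<mu>" "sets \<mu> = sets borel"
  shows "measure \<mu> (sort_pair -` {..(s, t)}) = measure \<mu> ({..min s t} \<times> {..t})
    + measure \<mu> ({..t} \<times> {..min s t}) - measure \<mu> ({..min s t} \<times> {..min s t})"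
proof -
  have "{..a} \<times> {..b} \<in> fmeasurable \<mu>" for a b :: real
    using finite_measure.fmeasurable_eq_sets[OF assms(1)] assms(2)
    by (simp add: borel_prod[symmetric])
  moreover have "{..min s t} \<times> {..t} \<inter> {..t} \<times> {..min s t} = {..min s t} \<times> {..min s t}"
    by auto
  ultimately show ?thesis
    unfolding sort_pair_vimage_atMost by (simp add: measure_Un3)
qed

lemma finite_measure_eqI_atMost:
  fixes \<mu> \<nu> :: "(real \<times> real) measure"
  assumes "finite_measure \<mu>" "finite_measure \<nu>" "sets \<mu> = sets borel" "sets \<nu> = sets borel"
    and eq: "\<And>s t. measure \<mu> {..(s, t)} = measure \<nu> {..(s, t)}"
  shows "\<mu> = \<nu>"
proof (rule measure_eqI_generator_eq[where E="range atMost" and \<Omega>=UNIV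
      and A="\<lambda>n. {..(real n, real n)}"])
  show "Int_stable (range (atMost :: real \<times> real \<Rightarrow> _))"
  proof (rule Int_stableI_image)
    fix p q :: "real \<times> real"
    show "\<exists>r\<in>UNIV. {..p} \<inter> {..q} = {..r}"
      by (rule bexI[of _ "inf p q"]) (auto simp: le_inf_iff)
  qed
  show "sets \<mu> = sigma_sets UNIV (range atMost)" "sets \<nu> = sigma_sets UNIV (range atMost)"
    using assms(3,4) by (simp_all add: borel_eq_atMost)
  show "(\<Union>n. {..(real n, real n)}) = UNIV"
  proof safe
    fix a b :: real
    obtain n :: nat where "max a b \<le> real n" using real_arch_simple by blast
    then show "(a, b) \<in> (\<Union>n. {..(real n, real n)})" by auto
  qed auto
  fix Z assume "Z \<in> range (atMost :: real \<times> real \<Rightarrow> _)"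
  then show "emeasure \<mu> Z = emeasure \<nu> Z"
    using eq by (auto simp: finite_measure.emeasure_eq_measure[OF assms(1)]
        finite_measure.emeasure_eq_measure[OF assms(2)])
qed (auto simp: finite_measure.emeasure_eq_measure[OF assms(1)])

lemma distr_sort_pair_eq:
  fixes \<mu> \<nu> :: "(real \<times> real) measure"
  assumes "finite_measure \<mu>" "finite_measure \<nu>" "sets \<mu> = sets borel" "sets \<nu> = sets borel"
    and symmetrized_eq: "\<And>a b. measure \<mu> ({..a} \<times> {..b}) + measure \<mu> ({..b} \<times> {..a})
      = measure \<nu> ({..a} \<times> {..b}) + measure \<nu> ({..b} \<times> {..a})"
  shows "distr \<mu> borel sort_pair = distr \<nu> borel sort_pair"
proof (rule finite_measure_eqI_atMost)
  fix s t :: real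
  have "measure \<mu> (sort_pair -` {..(s, t)}) = measure \<nu> (sort_pair -` {..(s, t)})"
    using symmetrized_eq[of "min s t" t] symmetrized_eq[of "min s t" "min s t"]
    by (simp add: measure_sort_pair_vimage_atMost assms(1-4))
  moreover have "sort_pair \<in> \<mu> \<rightarrow>\<^sub>M borel" "sort_pair \<in> \<nu> \<rightarrow>\<^sub>M borel"
    using assms(3,4) by (simp_all cong: measurable_cong_sets)
  ultimately show "measure (distr \<mu> borel sort_pair) {..(s, t)}
      = measure (distr \<nu> borel sort_pair) {..(s, t)}"
    using assms(3,4) by (simp add: measure_distr sets_eq_imp_space_eq[of _ borel])
qed (use assms in \<open>auto intro: finite_measure.finite_measure_distr\<close>)

lemma integral_symmetric_eq:
  fixes \<mu> \<nu> :: "(real \<times> real) measure" and h :: "real \<times> real \<Rightarrow> real"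
  assumes "finite_measure \<mu>" "finite_measure \<nu>" "sets \<mu> = sets borel" "sets \<nu> = sets borel"
    and "\<And>a b. measure \<mu> ({..a} \<times> {..b}) + measure \<mu> ({..b} \<times> {..a})
      = measure \<nu> ({..a} \<times> {..b}) + measure \<nu> ({..b} \<times> {..a})"
    and [measurable]: "h \<in> borel_measurable borel" and symmetric: "\<And>a b. h (a, b) = h (b, a)"
  shows "integral\<^sup>L \<mu> h = integral\<^sup>L \<nu> h"
proof -
  have h_sort: "h (sort_pair p) = h p" for p
    by (cases p) (auto simp: sort_pair_def min_def max_def symmetric)
  have "integral\<^sup>L \<mu> h = integral\<^sup>L (distr \<mu> borel sort_pair) h"
    if "sets \<mu> = sets borel" for \<mu> :: "(real \<times> real) measure"
    using that by (subst integral_distr) (simp_all add: h_sort cong: measurable_cong_sets)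
  then show ?thesis
    using distr_sort_pair_eq[OF assms(1-5)] assms(3,4) by metis
qed

lemma (in pair_sigma_finite) integral_product_mult:
  fixes f g :: "_ \<Rightarrow> real"
  assumes "integrable M1 f" "integrable M2 g"
  shows "(\<integral>z. (\<lambda>(x, y). f x * g y) z \<partial>(M1 \<Otimes>\<^sub>M M2)) = integral\<^sup>L M1 f * integral\<^sup>L M2 g"
proof -
  have [measurable]: "f \<in> borel_measurable M1" "g \<in> borel_measurable M2"
    using assms by (simp_all add: borel_measurable_integrable)
  have "integrable (M1 \<Otimes>\<^sub>M M2) (\<lambda>(x, y). f x * g y)"
    by (rule Fubini_integrable) (use assms in \<open>simp_all add: abs_mult\<close>)
  from integral_fst[OF this] show ?thesis
    by simp
qed

context prob_space
begin

lemma measure_distr_Pair_Times_atMost: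
  fixes X Y :: "'a \<Rightarrow> real"
  assumes [measurable]: "X \<in> borel_measurable M" "Y \<in> borel_measurable M"
  shows "measure (distr M (borel \<Otimes>\<^sub>M borel) (\<lambda>\<omega>. (X \<omega>, Y \<omega>))) ({..a} \<times> {..b})
    = joint_cdf M X Y a b"
  unfolding joint_cdf_def by (subst measure_distr) (auto intro!: arg_cong[where f="measure M"])

lemma measure_pair_distr_Times_atMost:
  fixes X Y :: "'a \<Rightarrow> real"
  assumes [measurable]: "X \<in> borel_measurable M" "Y \<in> borel_measurable M"
  shows "measure (distr M borel X \<Otimes>\<^sub>M distr M borel Y) ({..a} \<times> {..b})
    = cdf_of M X a * cdf_of M Y b"
proof -
  interpret marginals: pair_prob_space "distr M borel X" "distr M borel Y"
    by (simp add: pair_prob_space_def pair_sigma_finite_def prob_space_distr prob_space_imp_sigma_finite)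
  have "measure (distr M borel Z) {..c} = cdf_of M Z c" if [measurable]: "Z \<in> borel_measurable M"
    for Z :: "'a \<Rightarrow> real" and c
    unfolding cdf_of_def by (subst measure_distr) (auto intro!: arg_cong[where f="measure M"])
  then show ?thesis
    unfolding measure_def by (simp add: marginals.M2.emeasure_pair_measure_Times enn2real_mult)
qed

lemma integral_pair_distr_mult:
  fixes X Y :: "'a \<Rightarrow> real" and f g :: "real \<Rightarrow> real"
  assumes [measurable]: "X \<in> borel_measurable M" "Y \<in> borel_measurable M"
    "f \<in> borel_measurable borel" "g \<in> borel_measurable borel"
    and "integrable M (\<lambda>\<omega>. f (X \<omega>))" "integrable M (\<lambda>\<omega>. g (Y \<omega>))"
  shows "(\<integral>z. (\<lambda>(a, b). f a * g b) z \<partial>(distr M borel X \<Otimes>\<^sub>M distr M borel Y))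
    = expectation (\<lambda>\<omega>. f (X \<omega>)) * expectation (\<lambda>\<omega>. g (Y \<omega>))"
proof -
  interpret marginals: pair_prob_space "distr M borel X" "distr M borel Y"
    by (simp add: pair_prob_space_def pair_sigma_finite_def prob_space_distr prob_space_imp_sigma_finite)
  have "integrable (distr M borel X) f" "integrable (distr M borel Y) g"
    using assms(5,6) by (simp_all add: integrable_distr_eq)
  then have "(\<integral>z. (\<lambda>(a, b). f a * g b) z \<partial>(distr M borel X \<Otimes>\<^sub>M distr M borel Y))
      = integral\<^sup>L (distr M borel X) f * integral\<^sup>L (distr M borel Y) g"
    by (rule marginals.integral_product_mult)
  then show ?thesis
    by (simp add: integral_distr)
qed

lemma quasi_independent_imp_cov_eq_0:
  fixes X Y :: "'a \<Rightarrow> real"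
  assumes QI: "quasi_independent M X Y"
    and [measurable]: "X \<in> borel_measurable M" "Y \<in> borel_measurable M" "g \<in> borel_measurable borel"
    and square_X: "integrable M (\<lambda>\<omega>. (g (X \<omega>))\<^sup>2)"
    and square_Y: "integrable M (\<lambda>\<omega>. (g (Y \<omega>))\<^sup>2)"
  shows "cov M (\<lambda>\<omega>. g (X \<omega>)) (\<lambda>\<omega>. g (Y \<omega>)) = 0"
proof -
  have integrable: "integrable M (\<lambda>\<omega>. g (X \<omega>))" "integrable M (\<lambda>\<omega>. g (Y \<omega>))"
    using square_X square_Y by (simp_all add: square_integrable_imp_integrable)
  define \<mu> where "\<mu> = distr M (borel \<Otimes>\<^sub>M borel) (\<lambda>\<omega>. (X \<omega>, Y \<omega>))"
  define \<nu> where "\<nu> = distr M borel X \<Otimes>\<^sub>M distr M borel Y"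
  interpret marginals: pair_prob_space "distr M borel X" "distr M borel Y"
    by (simp add: pair_prob_space_def pair_sigma_finite_def prob_space_distr prob_space_imp_sigma_finite)
  have sets: "sets \<mu> = sets borel" "sets \<nu> = sets borel"
    unfolding \<mu>_def \<nu>_def
    by (metis sets_distr borel_prod) (metis sets_distr sets_pair_measure_cong borel_prod)
  have finite: "finite_measure \<mu>" "finite_measure \<nu>"
    unfolding \<mu>_def \<nu>_def using marginals.P.finite_measure_axioms
    by (simp_all add: finite_measure_distr)
  have joint: "measure \<mu> ({..a} \<times> {..b}) = joint_cdf M X Y a b" for a b
    unfolding \<mu>_def by (rule measure_distr_Pair_Times_atMost) simp_all
  have product: "measure \<nu> ({..a} \<times> {..b}) = cdf_of M X a * cdf_of M Y b" for a b
    unfolding \<nu>_def by (rule measure_pair_distr_Times_atMost) simp_all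
  have symmetrized: "measure \<mu> ({..a} \<times> {..b}) + measure \<mu> ({..b} \<times> {..a})
      = measure \<nu> ({..a} \<times> {..b}) + measure \<nu> ({..b} \<times> {..a})" for a b
    using QI[unfolded quasi_independent_def, rule_format, of a b]
    unfolding joint product by (simp add: field_simps)
  have "(\<lambda>(a, b). g a * g b) \<in> borel_measurable (borel :: (real \<times> real) measure)"
    unfolding borel_prod[symmetric] by measurable
  with finite sets symmetrized
  have "integral\<^sup>L \<mu> (\<lambda>(a, b). g a * g b) = integral\<^sup>L \<nu> (\<lambda>(a, b). g a * g b)"
    by (rule integral_symmetric_eq) simp
  moreover have "integral\<^sup>L \<mu> (\<lambda>(a, b). g a * g b) = expectation (\<lambda>\<omega>. g (X \<omega>) * g (Y \<omega>))"
    unfolding \<mu>_def by (subst integral_distr) simp_all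
  moreover have "integral\<^sup>L \<nu> (\<lambda>(a, b). g a * g b)
      = expectation (\<lambda>\<omega>. g (X \<omega>)) * expectation (\<lambda>\<omega>. g (Y \<omega>))"
    unfolding \<nu>_def using integrable by (intro integral_pair_distr_mult) simp_all
  ultimately show ?thesis
    using integrable square_X square_Y
    by (simp add: cov_eq_expectation_mult square_integrable_imp_integrable_mult)
qed

end

theorem theorem1:
  fixes M :: "'a measure" and X Y :: "'a \<Rightarrow> real"
  assumes "prob_space M" and "atomless M"
    and "L2 M X" and "L2 M Y"
  shows "IC M 0 X Y \<longleftrightarrow> quasi_independent M X Y"
proof -
  interpret prob_space M by fact
  have [measurable]: "X \<in> borel_measurable M" "Y \<in> borel_measurable M"
    and square: "integrable M (\<lambda>\<omega>. (X \<omega>)\<^sup>2)" "integrable M (\<lambda>\<omega>. (Y \<omega>)\<^sup>2)"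
    using assms(3,4) unfolding L2_def by auto
  show ?thesis
  proof
    assume "IC M 0 X Y"
    then show "quasi_independent M X Y" by (rule IC_0_imp_quasi_independent) simp_all
  next
    assume QI: "quasi_independent M X Y"
    have cov_eq_0: "cov M (\<lambda>\<omega>. g (X \<omega>)) (\<lambda>\<omega>. g (Y \<omega>)) = 0"
      if "g \<in> borel_measurable borel" "integrable M (\<lambda>\<omega>. (g (X \<omega>))\<^sup>2)"
        "integrable M (\<lambda>\<omega>. (g (Y \<omega>))\<^sup>2)" for g
      using that by (intro quasi_independent_imp_cov_eq_0[OF QI]) simp_all
    have "corr M X Y = 0"
      using cov_eq_0[of "\<lambda>t. t"] square unfolding corr_def by simp
    moreover have "corr M (\<lambda>\<omega>. g (X \<omega>)) (\<lambda>\<omega>. g (Y \<omega>)) = 0" if "admissible M X Y g" for g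
    proof -
      have "cov M (\<lambda>\<omega>. g (X \<omega>)) (\<lambda>\<omega>. g (Y \<omega>)) = 0"
        using that unfolding admissible_def L2_def by (intro cov_eq_0) simp_all
      then show ?thesis
        unfolding corr_def by simp
    qed
    ultimately show "IC M 0 X Y"
      using assms(3,4) unfolding IC_def by blast
  qed
qed

end
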